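(* Let $\beta>1$, $\mathbf{L}\in Q^2(\mathbb{D}^2)$, and let $F\colon\mathbb{D}^2\to\mathbb{C}$ be analytic. Suppose there exists $p\in\mathbb{Z}_+$ such that for every $d\in(0,\beta]$ there exists $\eta(d)\in(0,d)$ such that for each $z^0\in\mathbb{D}^2$ there are $R=(r_1,r_2)$ with $r_j=r_j(d,z^0)\in(\eta(d),d)$, $j=1,2$, and $k^0=k^0(d,z^0)\le p$ such that the polynomial $p_{k^0}$ is a main polynomial in the diagonal power expansion of $F$ at $z^0$ on $\mathbb{T}^2\big(z^0,\frac{R}{\mathbf{L}(z^0)}\big)$. Then $F$ has bounded $\mathbf{L}$-index in joint variables.
   Context: $\mathbb{D}^2=\{(z_1,z_2)\in\mathbb{C}^2:|z_1|<1,|z_2|<1\}$, $\mathbb{Z}_+=\{0,1,2,\dots\}$, $\mathbb{R}_+=[0,\infty)$. $\mathbf{L}(z)=(l_1(z),l_2(z))$, where each $l_j\colon\mathbb{D}^2\to\mathbb{R}_+$ is continuous and satisfies $l_j(z_1,z_2)>\beta/(1-|z_j|)$ for all $(z_1,z_2)\in\mathbb{D}^2$, $j=1,2$. For $z^0\in\mathbb{C}^2$ and $R=(r_1,r_2)\in\mathbb{R}_+^2$: $\mathbb{D}^2[z^0,R]=\{z:|z_j-z_j^0|\le r_j,\ j=1,2\}$, $\mathbb{T}^2(z^0,R)=\{z:|z_j-z_j^0|=r_j,\ j=1,2\}$, $\frac{R}{\mathbf{L}(z^0)}=\big(\frac{r_1}{l_1(z^0)},\frac{r_2}{l_2(z^0)}\big)$.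 $F^{(p,q)}=\frac{\partial^{p+q}F}{\partial z_1^p\partial z_2^q}$. An analytic $F\colon\mathbb{D}^2\to\mathbb{C}$ has bounded $\mathbf{L}$-index in joint variables if there is $n_0\in\mathbb{Z}_+$ such that for all $z\in\mathbb{D}^2$ and all $(p_1,p_2)\in\mathbb{Z}_+^2$: $\frac{|F^{(p_1,p_2)}(z)|}{p_1!p_2!\,l_1^{p_1}(z)l_2^{p_2}(z)}\le\max\{\frac{|F^{(k_1,k_2)}(z)|}{k_1!k_2!\,l_1^{k_1}(z)l_2^{k_2}(z)}:0\le k_1+k_2\le n_0\}$. $Q^2(\mathbb{D}^2)$ is the class of such $\mathbf{L}$ for which, for all $R=(r_1,r_2)\in[0,\beta]^2$ and $j=1,2$, $0<\lambda_{1,j}(R)\le\lambda_{2,j}(R)<\infty$, where $\lambda_{1,j}(R)=\inf_{z^0\in\mathbb{D}^2}\inf\{l_j(z)/l_j(z^0): z\in\mathbb{D}^2[z^0,R/\mathbf{L}(z^0)]\}$ and $\lambda_{2,j}(R)=\sup_{z^0\in\mathbb{D}^2}\sup\{l_j(z)/l_j(z^0): z\in\mathbb{D}^2[z^0,R/\mathbf{L}(z^0)]\}$. Diagonal power expansion: for $z^0\in\mathbb{D}^2$ write $F(z)=\sum_{k=0}^\infty p_k(z_1-z_1^0,z_2-z_2^0)$, where $p_k(w_1,w_2)=\sum_{j_1+j_2=k}b_{j_1,j_2}w_1^{j_1}w_2^{j_2}$ and $b_{j_1,j_2}=\frac{F^{(j_1,j_2)}(z^0)}{j_1!j_2!}$.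 For $R=(r_1,r_2)$, the polynomial $p_{k^0}$ ($k^0\in\mathbb{Z}_+$) is a main polynomial of this expansion on $\mathbb{T}^2(z^0,R)$ if for every $z\in\mathbb{T}^2(z^0,R)$: $\big|\sum_{k\ne k^0}p_k(z_1-z_1^0,z_2-z_2^0)\big|\le\frac12\max\{|b_{j_1,j_2}|r_1^{j_1}r_2^{j_2}: j_1+j_2=k^0\}$. *)

theory Defs
  imports "HOL-Complex_Analysis.Complex_Analysis"
begin

definition bidisc :: "(complex \<times> complex) set" where
  "bidisc = {z. cmod (fst z) < 1 \<and> cmod (snd z) < 1}"

text \<open>Analyticity (holomorphy) in two variables: complex Frechet differentiability
  at every point of the bidisc, with complex-linear derivative.\<close>
definition analytic2 :: "(complex \<times> complex \<Rightarrow> complex) \<Rightarrow> bool" where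
  "analytic2 F \<longleftrightarrow> (\<forall>z\<in>bidisc. \<exists>D. (F has_derivative D) (at z) \<and>
       (\<forall>c::complex. \<forall>v. D (c * fst v, c * snd v) = c * D v))"

definition pderiv2 :: "(complex \<times> complex \<Rightarrow> complex) \<Rightarrow> nat \<Rightarrow> nat \<Rightarrow> complex \<times> complex \<Rightarrow> complex" where
  "pderiv2 F p q z =
     (deriv ^^ p) (\<lambda>w1. (deriv ^^ q) (\<lambda>w2. F (w1, w2)) (snd z)) (fst z)"

definition cpolydisc :: "complex \<times> complex \<Rightarrow> real \<times> real \<Rightarrow> (complex \<times> complex) set" where
  "cpolydisc z0 R = {z. cmod (fst z - fst z0) \<le> fst R \<and> cmod (snd z - snd z0) \<le> snd R}"

definition torus2 :: "complex \<times> complex \<Rightarrow> real \<times> real \<Rightarrow> (complex \<times> complex) set" where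
  "torus2 z0 R = {z. cmod (fst z - fst z0) = fst R \<and> cmod (snd z - snd z0) = snd R}"

definition divL :: "real \<times> real \<Rightarrow> (complex \<times> complex \<Rightarrow> real) \<Rightarrow> (complex \<times> complex \<Rightarrow> real)
    \<Rightarrow> complex \<times> complex \<Rightarrow> real \<times> real" where
  "divL R l1 l2 z0 = (fst R / l1 z0, snd R / l2 z0)"

definition lambda1 :: "(complex \<times> complex \<Rightarrow> real) \<Rightarrow> (complex \<times> complex \<Rightarrow> real)
    \<Rightarrow> (complex \<times> complex \<Rightarrow> real) \<Rightarrow> real \<times> real \<Rightarrow> ereal" where
  "lambda1 l l1 l2 R = (INF z0\<in>bidisc. INF z\<in>cpolydisc z0 (divL R l1 l2 z0). ereal (l z / l z0))"

definition lambda2 :: "(complex \<times> complex \<Rightarrow> real) \<Rightarrow> (complex \<times> complex \<Rightarrow> real)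
    \<Rightarrow> (complex \<times> complex \<Rightarrow> real) \<Rightarrow> real \<times> real \<Rightarrow> ereal" where
  "lambda2 l l1 l2 R = (SUP z0\<in>bidisc. SUP z\<in>cpolydisc z0 (divL R l1 l2 z0). ereal (l z / l z0))"

definition admissibleL :: "real \<Rightarrow> (complex \<times> complex \<Rightarrow> real) \<Rightarrow> (complex \<times> complex \<Rightarrow> real) \<Rightarrow> bool" where
  "admissibleL \<beta> l1 l2 \<longleftrightarrow>
     continuous_on bidisc l1 \<and> continuous_on bidisc l2 \<and>
     (\<forall>z\<in>bidisc. l1 z \<ge> 0 \<and> l2 z \<ge> 0 \<and>
        l1 z > \<beta> / (1 - cmod (fst z)) \<and> l2 z > \<beta> / (1 - cmod (snd z)))"

definition Q2 :: "real \<Rightarrow> (complex \<times> complex \<Rightarrow> real) \<Rightarrow> (complex \<times> complex \<Rightarrow> real) \<Rightarrow> bool" where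
  "Q2 \<beta> l1 l2 \<longleftrightarrow> admissibleL \<beta> l1 l2 \<and>
     (\<forall>r1 r2. 0 \<le> r1 \<and> r1 \<le> \<beta> \<and> 0 \<le> r2 \<and> r2 \<le> \<beta> \<longrightarrow>
        (\<forall>l\<in>{l1, l2}. 0 < lambda1 l l1 l2 (r1, r2) \<and>
            lambda1 l l1 l2 (r1, r2) \<le> lambda2 l l1 l2 (r1, r2) \<and>
            lambda2 l l1 l2 (r1, r2) < \<infinity>))"

definition nterm :: "(complex \<times> complex \<Rightarrow> complex) \<Rightarrow> (complex \<times> complex \<Rightarrow> real)
    \<Rightarrow> (complex \<times> complex \<Rightarrow> real) \<Rightarrow> complex \<times> complex \<Rightarrow> nat \<Rightarrow> nat \<Rightarrow> real" where
  "nterm F l1 l2 z p q = cmod (pderiv2 F p q z) / (fact p * fact q * l1 z ^ p * l2 z ^ q)"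

definition bounded_L_index_joint :: "(complex \<times> complex \<Rightarrow> complex) \<Rightarrow> (complex \<times> complex \<Rightarrow> real)
    \<Rightarrow> (complex \<times> complex \<Rightarrow> real) \<Rightarrow> bool" where
  "bounded_L_index_joint F l1 l2 \<longleftrightarrow>
     (\<exists>n0::nat. \<forall>z\<in>bidisc. \<forall>p1 p2.
        nterm F l1 l2 z p1 p2 \<le> Max ((\<lambda>(k1, k2). nterm F l1 l2 z k1 k2) ` {(k1, k2). k1 + k2 \<le> n0}))"

definition bcoef :: "(complex \<times> complex \<Rightarrow> complex) \<Rightarrow> complex \<times> complex \<Rightarrow> nat \<Rightarrow> nat \<Rightarrow> complex" where
  "bcoef F z0 j1 j2 = pderiv2 F j1 j2 z0 / (fact j1 * fact j2)"

definition hpoly :: "(complex \<times> complex \<Rightarrow> complex) \<Rightarrow> complex \<times> complex \<Rightarrow> nat \<Rightarrow> complex \<times> complex \<Rightarrow> complex" where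
  "hpoly F z0 k w = (\<Sum>j1\<le>k. bcoef F z0 j1 (k - j1) * fst w ^ j1 * snd w ^ (k - j1))"

definition main_polynomial :: "(complex \<times> complex \<Rightarrow> complex) \<Rightarrow> complex \<times> complex \<Rightarrow> real \<times> real \<Rightarrow> nat \<Rightarrow> bool" where
  "main_polynomial F z0 R k0 \<longleftrightarrow>
     (\<forall>z\<in>torus2 z0 R.
        cmod (\<Sum>k. if k = k0 then 0 else hpoly F z0 k (fst z - fst z0, snd z - snd z0))
          \<le> 1/2 * Max ((\<lambda>j1. cmod (bcoef F z0 j1 (k0 - j1)) * fst R ^ j1 * snd R ^ (k0 - j1)) ` {..k0}))"

end

theory Submission
  imports Defs
begin

text \<open>
  Near every point z the main polynomial p_k dominates the diagonal expansion on the torus of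
  radii R/L(z), so |F| <= (p + 2) M(z) on the corresponding polydisc, where M(z) is the largest
  term |b_{j1,j2}| r1^j1 r2^j2 of p_k. Because L is in Q^2, these radii are comparable to
  1/l_j(z0) throughout the polydisc of radius beta/L(z0); Cauchy's inequality then gives
  M(z') <= K M(z) for neighbouring points, and a chain of N such steps, with K and N independent
  of z0, bounds |F| by B M(z0) on the torus of radius beta/L(z0). Cauchy's inequality at z0
  turns this into: beta^(p1+p2) times the normalized derivative of order (p1, p2) is at most
  B beta^p times the largest normalized derivative of order at most p. Since beta > 1, this
  controls every order with beta^(p1+p2) > B beta^p.
\<close>

lemma analytic2_continuous_on:
  assumes "analytic2 F" shows "continuous_on bidisc F"
proof -
  have "\<forall>z\<in>bidisc. isCont F z"
    using assms unfolding analytic2_def by (meson has_derivative_continuous)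
  then show ?thesis by (simp add: continuous_at_imp_continuous_on)
qed

lemma has_field_derivative_compose_homogeneous:
  fixes g :: "complex \<Rightarrow> complex \<times> complex"
  assumes g: "(g has_derivative (\<lambda>h. (h * fst e, h * snd e))) (at x)"
    and F: "(F has_derivative D) (at (g x))"
    and hom: "\<forall>c::complex. \<forall>v. D (c * fst v, c * snd v) = c * D v"
  shows "((\<lambda>t. F (g t)) has_field_derivative D e) (at x)"
proof -
  have "((\<lambda>t. F (g t)) has_derivative (\<lambda>h. D (h * fst e, h * snd e))) (at x)"
    using has_derivative_compose[OF g F] by (simp add: o_def)
  moreover have "(\<lambda>h. D (h * fst e, h * snd e)) = (\<lambda>h. D e * h)"
    using hom by (simp add: mult.commute)
  ultimately show ?thesis by (simp add: has_field_derivative_def)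
qed

lemma analytic2_holomorphic_snd:
  assumes F: "analytic2 F" and a: "cmod a < 1"
  shows "(\<lambda>y. F (a, y)) holomorphic_on ball 0 1"
proof -
  have "(\<lambda>y. F (a, y)) field_differentiable at b" if b: "cmod b < 1" for b
  proof -
    have "(a, b) \<in> bidisc" using a b by (simp add: bidisc_def)
    then obtain D where D: "(F has_derivative D) (at (a, b))"
      and hom: "\<forall>c::complex. \<forall>v. D (c * fst v, c * snd v) = c * D v"
      using F unfolding analytic2_def by blast
    have "((\<lambda>y. (a, y)) has_derivative (\<lambda>h. (h * fst (0, 1), h * snd (0, 1)))) (at b)"
      by (auto intro!: derivative_eq_intros)
    from has_field_derivative_compose_homogeneous[OF this _ hom] D
    show ?thesis unfolding field_differentiable_def by auto
  qed
  then show ?thesis by (simp add: holomorphic_on_open field_differentiable_def)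
qed

lemma analytic2_holomorphic_fst:
  assumes F: "analytic2 F" and b: "cmod b < 1"
  shows "(\<lambda>x. F (x, b)) holomorphic_on ball 0 1"
proof -
  have "(\<lambda>x. F (x, b)) field_differentiable at a" if a: "cmod a < 1" for a
  proof -
    have "(a, b) \<in> bidisc" using a b by (simp add: bidisc_def)
    then obtain D where D: "(F has_derivative D) (at (a, b))"
      and hom: "\<forall>c::complex. \<forall>v. D (c * fst v, c * snd v) = c * D v"
      using F unfolding analytic2_def by blast
    have "((\<lambda>x. (x, b)) has_derivative (\<lambda>h. (h * fst (1, 0), h * snd (1, 0)))) (at a)"
      by (auto intro!: derivative_eq_intros)
    from has_field_derivative_compose_homogeneous[OF this _ hom] D
    show ?thesis unfolding field_differentiable_def by auto
  qed
  then show ?thesis by (simp add: holomorphic_on_open field_differentiable_def)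
qed

section \<open>Contour integrals depending holomorphically on a parameter\<close>

lemma continuous_on_contour_integral_param:
  fixes H :: "'a::topological_space \<Rightarrow> complex \<Rightarrow> complex" and g :: "real \<Rightarrow> complex"
  assumes cont: "continuous_on (U \<times> path_image g) (\<lambda>(x, y). H x y)"
    and g: "path g" and g': "continuous_on {0..1} (\<lambda>t. vector_derivative g (at t))"
  shows "continuous_on U (\<lambda>x. contour_integral g (H x))"
proof -
  have gc: "continuous_on {0..1} g" using g by (simp add: path_def)
  have c0: "continuous_on (U \<times> {0..1}) (\<lambda>z. (fst z, g (snd z)))"
    by (intro continuous_intros continuous_on_compose2[OF gc]) auto
  have c1: "continuous_on (U \<times> {0..1}) (\<lambda>z. (\<lambda>(x, y). H x y) (fst z, g (snd z)))"
    by (rule continuous_on_compose2[OF cont c0]) (auto simp: path_image_def)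
  have c2: "continuous_on (U \<times> {0..1}) (\<lambda>z. vector_derivative g (at (snd z)))"
    by (intro continuous_on_compose2[OF g'] continuous_intros) auto
  have "continuous_on (U \<times> cbox 0 1) (\<lambda>(x, t). H x (g t) * vector_derivative g (at t))"
    using continuous_on_mult[OF c1 c2] by (simp add: case_prod_unfold cbox_interval)
  then have "continuous_on U (\<lambda>x. integral (cbox 0 1) (\<lambda>t. H x (g t) * vector_derivative g (at t)))"
    by (rule integral_continuous_on_param)
  then show ?thesis by (simp add: contour_integral_integral cbox_interval)
qed

lemma contour_integral_linepath_circlepath_swap:
  fixes H :: "complex \<Rightarrow> complex \<Rightarrow> complex"
  assumes r: "0 < r" and cont: "continuous_on (closed_segment a b \<times> sphere c r) (\<lambda>(x, y). H x y)"
  shows "contour_integral (linepath a b) (\<lambda>x. contour_integral (circlepath c r) (H x)) =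
           contour_integral (circlepath c r) (\<lambda>y. contour_integral (linepath a b) (\<lambda>x. H x y))"
    and "(\<lambda>y. contour_integral (linepath a b) (\<lambda>x. H x y)) contour_integrable_on circlepath c r"
proof -
  have image: "path_image (circlepath c r) = sphere c r"
    using r by (simp add: path_image_circlepath_nonneg)
  show "contour_integral (linepath a b) (\<lambda>x. contour_integral (circlepath c r) (H x)) =
          contour_integral (circlepath c r) (\<lambda>y. contour_integral (linepath a b) (\<lambda>x. H x y))"
    by (rule contour_integral_swap)
      (use cont image in \<open>auto simp: vector_derivative_circlepath intro!: continuous_intros\<close>)
  have "continuous_on (sphere c r \<times> closed_segment a b) (\<lambda>z. (\<lambda>(x, y). H x y) (snd z, fst z))"
    by (rule continuous_on_compose2[OF cont]) (auto intro!: continuous_intros)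
  then have "continuous_on (sphere c r) (\<lambda>y. contour_integral (linepath a b) (\<lambda>x. H x y))"
    by (intro continuous_on_contour_integral_param) (auto simp: case_prod_unfold intro!: continuous_intros)
  then show "(\<lambda>y. contour_integral (linepath a b) (\<lambda>x. H x y)) contour_integrable_on circlepath c r"
    using image by (simp add: contour_integrable_continuous_circlepath)
qed

lemma holomorphic_on_contour_integral_circlepath:
  fixes H :: "complex \<Rightarrow> complex \<Rightarrow> complex"
  assumes U: "open U" and r: "0 < r"
    and cont: "continuous_on (U \<times> sphere c r) (\<lambda>(x, y). H x y)"
    and hol: "\<And>y. y \<in> sphere c r \<Longrightarrow> (\<lambda>x. H x y) holomorphic_on U"
  shows "(\<lambda>x. contour_integral (circlepath c r) (H x)) holomorphic_on U"
proof -
  let ?g = "circlepath c r" and ?I = "\<lambda>x. contour_integral (circlepath c r) (H x)"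
  have image: "path_image ?g = sphere c r" using r by (simp add: path_image_circlepath_nonneg)
  have "continuous_on U ?I"
    by (rule continuous_on_contour_integral_param)
      (use cont image in \<open>auto simp: vector_derivative_circlepath intro!: continuous_intros\<close>)
  \<comment> \<open>Morera: after exchanging the order of integration, Cauchy's theorem kills each triangle.\<close>
  moreover have "contour_integral (linepath a b) ?I + contour_integral (linepath b d) ?I +
      contour_integral (linepath d a) ?I = 0" if abd: "convex hull {a, b, d} \<subseteq> U" for a b d
  proof -
    let ?J = "\<lambda>a b y. contour_integral (linepath a b) (\<lambda>x. H x y)"
    have segs: "closed_segment a b \<subseteq> U" "closed_segment b d \<subseteq> U" "closed_segment d a \<subseteq> U"
      using segments_subset_convex_hull(1,3,5) abd by (meson order_trans)+
    have segment_cont: "continuous_on (closed_segment x x' \<times> sphere c r) (\<lambda>(x, y). H x y)"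
      if "closed_segment x x' \<subseteq> U" for x x'
      using that by (intro continuous_on_subset[OF cont]) auto
    note swap = contour_integral_linepath_circlepath_swap(1)[OF r segment_cont]
      and swap_integrable = contour_integral_linepath_circlepath_swap(2)[OF r segment_cont]
    have "?J a b y + ?J b d y + ?J d a y = 0" if y: "y \<in> sphere c r" for y
    proof -
      have cint: "(\<lambda>x. H x y) contour_integrable_on linepath x x'" if "closed_segment x x' \<subseteq> U" for x x'
        by (rule contour_integrable_holomorphic_simple[OF hol[OF y] U]) (use that in auto)
      have "contour_integral (linepath a b +++ linepath b d +++ linepath d a) (\<lambda>x. H x y) = 0"
        by (rule contour_integral_unique[OF Cauchy_theorem_triangle])
          (use hol[OF y] abd holomorphic_on_subset in blast)
      then show ?thesis
        using cint[OF segs(1)] cint[OF segs(2)] cint[OF segs(3)]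
        by (simp add: contour_integrable_joinI contour_integral_join add.assoc)
    qed
    then have "contour_integral ?g (\<lambda>y. ?J a b y + ?J b d y + ?J d a y) = contour_integral ?g (\<lambda>_. 0)"
      using image by (intro contour_integral_eq) auto
    then show ?thesis
      using segs swap_integrable by (simp add: swap contour_integral_add contour_integrable_add)
  qed
  ultimately have "?I analytic_on U" using Morera_triangle[OF _ U] by blast
  then show ?thesis by (simp add: analytic_imp_holomorphic)
qed

section \<open>Partial derivatives and Cauchy estimates on polydiscs\<close>

definition deriv_snd :: "(complex \<times> complex \<Rightarrow> complex) \<Rightarrow> nat \<Rightarrow> complex \<Rightarrow> complex \<Rightarrow> complex" where
  "deriv_snd F q c2 w1 = (deriv ^^ q) (\<lambda>w2. F (w1, w2)) c2"

lemma pderiv2_eq_higher_deriv_deriv_snd: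
  "pderiv2 F p q z = (deriv ^^ p) (deriv_snd F q (snd z)) (fst z)"
  unfolding pderiv2_def deriv_snd_def ..

lemma cball_subset_unit_ball:
  fixes a :: complex
  assumes "cmod a + s < 1" shows "cball a s \<subseteq> ball 0 1"
  using assms by (simp add: cball_subset_ball_iff dist_norm)

lemma Cauchy_inequality_cball:
  assumes "f holomorphic_on S" "cball c s \<subseteq> S" "0 < s"
    and "\<And>x. cmod (c - x) = s \<Longrightarrow> cmod (f x) \<le> B"
  shows "cmod ((deriv ^^ n) f c) \<le> fact n * B / s ^ n"
proof (rule Cauchy_inequality)
  show "f holomorphic_on ball c s"
    using assms(1,2) ball_subset_cball holomorphic_on_subset by blast
  show "continuous_on (cball c s) f"
    using assms(1,2) holomorphic_on_imp_continuous_on continuous_on_subset by blast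
qed (use assms in auto)

lemma maximum_modulus_cball:
  assumes "f holomorphic_on S" "cball c s \<subseteq> S" "0 < s"
    and "\<And>x. cmod (c - x) = s \<Longrightarrow> cmod (f x) \<le> B" and "w \<in> cball c s"
  shows "cmod (f w) \<le> B"
proof -
  have "f holomorphic_on interior (cball c s)"
    using holomorphic_on_subset[OF assms(1) order_trans[OF ball_subset_cball assms(2)]] by simp
  moreover have "continuous_on (closure (cball c s)) f"
    using continuous_on_subset[OF holomorphic_on_imp_continuous_on[OF assms(1)] assms(2)] by simp
  ultimately show ?thesis
    using maximum_modulus_frontier[of f "cball c s"] assms(3-5) by (auto simp: dist_norm)
qed

text \<open>
  Cauchy's formula in the second variable writes \<open>deriv_snd\<close> as a circle integral that is
  holomorphic in the first variable; this replaces Hartogs' theorem.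
\<close>

lemma holomorphic_on_deriv_snd:
  assumes F: "analytic2 F" and c2: "cmod c2 < 1"
  shows "deriv_snd F q c2 holomorphic_on ball 0 1"
proof -
  define r where "r = (1 - cmod c2) / 2"
  have r: "0 < r" "cmod c2 + r < 1"
    using c2 by (simp_all add: r_def field_simps)
  have cb: "cball c2 r \<subseteq> ball 0 1" by (rule cball_subset_unit_ball[OF r(2)])
  define H where "H w1 u = F (w1, u) / (u - c2) ^ Suc q" for w1 u
  have Cauchy: "deriv_snd F q c2 w1 = fact q / (2 * pi * \<i>) * contour_integral (circlepath c2 r) (H w1)"
    if w1: "w1 \<in> ball 0 1" for w1
  proof -
    have hol: "(\<lambda>w2. F (w1, w2)) holomorphic_on ball 0 1"
      using analytic2_holomorphic_snd[OF F] w1 by simp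
    have "(H w1 has_contour_integral (2 * pi * \<i>) / fact q * deriv_snd F q c2 w1) (circlepath c2 r)"
      unfolding H_def deriv_snd_def
    proof (rule Cauchy_has_contour_integral_higher_derivative_circlepath)
      show "continuous_on (cball c2 r) (\<lambda>w2. F (w1, w2))"
        using holomorphic_on_imp_continuous_on[OF hol] cb continuous_on_subset by blast
      show "(\<lambda>w2. F (w1, w2)) holomorphic_on ball c2 r"
        using hol cb ball_subset_cball holomorphic_on_subset by blast
    qed (use r(1) in simp)
    then show ?thesis by (simp add: contour_integral_unique)
  qed
  have "(\<lambda>w1. contour_integral (circlepath c2 r) (H w1)) holomorphic_on ball 0 1"
  proof (rule holomorphic_on_contour_integral_circlepath)
    have "ball 0 1 \<times> sphere c2 r \<subseteq> bidisc"
      using cb sphere_cball by (auto simp: bidisc_def)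
    then have "continuous_on (ball 0 1 \<times> sphere c2 r) (\<lambda>z. F z / (snd z - c2) ^ Suc q)"
      using r(1) by (intro continuous_intros continuous_on_subset[OF analytic2_continuous_on[OF F]]) auto
    then show "continuous_on (ball 0 1 \<times> sphere c2 r) (\<lambda>(x, y). H x y)"
      by (simp add: H_def case_prod_unfold)
    show "(\<lambda>x. H x y) holomorphic_on ball 0 1" if y: "y \<in> sphere c2 r" for y
    proof -
      have "cmod y < 1" and "y \<noteq> c2" using y cb sphere_cball r(1) by fastforce+
      then show ?thesis
        unfolding H_def by (intro holomorphic_intros analytic2_holomorphic_fst[OF F]) auto
    qed
  qed (use r(1) in auto)
  then have "(\<lambda>w1. fact q / (2 * pi * \<i>) * contour_integral (circlepath c2 r) (H w1)) holomorphic_on ball 0 1"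
    by (intro holomorphic_intros)
  then show ?thesis by (rule holomorphic_transform) (simp add: Cauchy)
qed

lemma bcoef_Cauchy_inequality:
  assumes F: "analytic2 F" and s1: "0 < s1" "cmod (fst c) + s1 < 1"
    and s2: "0 < s2" "cmod (snd c) + s2 < 1"
    and B: "\<And>w. w \<in> torus2 c (s1, s2) \<Longrightarrow> cmod (F w) \<le> B"
  shows "cmod (bcoef F c p q) * s1 ^ p * s2 ^ q \<le> B"
proof -
  have inner: "cmod (deriv_snd F q (snd c) w1) \<le> fact q * B / s2 ^ q" if w1: "cmod (fst c - w1) = s1" for w1
    unfolding deriv_snd_def
  proof (rule Cauchy_inequality_cball[OF _ cball_subset_unit_ball[OF s2(2)] s2(1)])
    have "w1 \<in> cball (fst c) s1" using w1 by (simp add: dist_norm)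
    then show "(\<lambda>w2. F (w1, w2)) holomorphic_on ball 0 1"
      using cball_subset_unit_ball[OF s1(2)] by (intro analytic2_holomorphic_snd[OF F]) auto
    show "cmod (F (w1, x)) \<le> B" if "cmod (snd c - x) = s2" for x
      by (rule B) (use that w1 in \<open>auto simp: torus2_def norm_minus_commute\<close>)
  qed
  have "cmod (pderiv2 F p q c) \<le> fact p * (fact q * B / s2 ^ q) / s1 ^ p"
    unfolding pderiv2_eq_higher_deriv_deriv_snd
    by (rule Cauchy_inequality_cball[OF holomorphic_on_deriv_snd[OF F] cball_subset_unit_ball[OF s1(2)] s1(1)])
      (use s2 inner in auto)
  then have "fact p * fact q * cmod (bcoef F c p q) \<le> fact p * fact q * B / (s1 ^ p * s2 ^ q)"
    by (simp add: bcoef_def norm_divide norm_mult mult_ac)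
  then show ?thesis
    using s1 s2 by (simp add: field_simps)
qed

lemma polydisc_maximum_modulus:
  assumes F: "analytic2 F" and s1: "0 < s1" "cmod (fst c) + s1 < 1"
    and s2: "0 < s2" "cmod (snd c) + s2 < 1"
    and B: "\<And>w. w \<in> torus2 c (s1, s2) \<Longrightarrow> cmod (F w) \<le> B"
    and w: "w \<in> cpolydisc c (s1, s2)"
  shows "cmod (F w) \<le> B"
proof -
  obtain w1 w2 where ww: "w = (w1, w2)" by (cases w)
  have w1: "w1 \<in> cball (fst c) s1" and w2: "w2 \<in> cball (snd c) s2"
    using w ww by (auto simp: cpolydisc_def dist_norm norm_minus_commute)
  have edge: "cmod (F (x, w2)) \<le> B" if x: "cmod (fst c - x) = s1" for x
  proof (rule maximum_modulus_cball[OF _ cball_subset_unit_ball[OF s2(2)] s2(1) _ w2])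
    have "x \<in> cball (fst c) s1" using x by (simp add: dist_norm)
    then show "(\<lambda>y. F (x, y)) holomorphic_on ball 0 1"
      using cball_subset_unit_ball[OF s1(2)] by (intro analytic2_holomorphic_snd[OF F]) auto
    show "cmod (F (x, y)) \<le> B" if "cmod (snd c - y) = s2" for y
      by (rule B) (use that x in \<open>auto simp: torus2_def norm_minus_commute\<close>)
  qed
  have "cmod (F (w1, w2)) \<le> B"
    using cball_subset_unit_ball[OF s2(2)] w2
    by (intro maximum_modulus_cball[OF _ cball_subset_unit_ball[OF s1(2)] s1(1) edge w1]
        analytic2_holomorphic_fst[OF F]) auto
  then show ?thesis using ww by simp
qed

section \<open>The diagonal power expansion\<close>

lemma summable_on_geometric_product:
  fixes x y :: real assumes x: "0 \<le> x" "x < 1" and y: "0 \<le> y" "y < 1"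
  shows "(\<lambda>(p, q). x ^ p * y ^ q) summable_on UNIV"
proof -
  have geom: "((\<lambda>n. t ^ n) has_sum (1 / (1 - t))) UNIV" if "0 \<le> t" "t < 1" for t :: real
    by (rule norm_summable_imp_has_sum) (use that in \<open>auto intro: summable_geometric geometric_sums\<close>)
  have rows: "((\<lambda>q. x ^ p * y ^ q) has_sum x ^ p * (1 / (1 - y))) UNIV" for p
    by (rule has_sum_cmult_right[OF geom[OF y]])
  have "(\<lambda>p. x ^ p * (1 / (1 - y))) summable_on UNIV"
    unfolding summable_on_def using has_sum_cmult_left[OF geom[OF x]] by blast
  then have "(\<lambda>(p, q). x ^ p * y ^ q) summable_on Sigma UNIV (\<lambda>_. UNIV)"
    by (intro summable_on_SigmaI[where g = "\<lambda>p. x ^ p * (1 / (1 - y))"]) (use rows x y in auto)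
  then show ?thesis by simp
qed

lemma bcoef_terms_geometric_bound:
  assumes F: "analytic2 F" and u: "cmod (fst c) + cmod u < 1" and v: "cmod (snd c) + cmod v < 1"
  obtains x y B :: real where "0 \<le> x" "x < 1" "0 \<le> y" "y < 1"
    and "\<And>p q. cmod (bcoef F c p q * u ^ p * v ^ q) \<le> B * (x ^ p * y ^ q)"
proof -
  define s1 where "s1 = (1 + cmod u - cmod (fst c)) / 2"
  define s2 where "s2 = (1 + cmod v - cmod (snd c)) / 2"
  have s1: "cmod u < s1" "cmod (fst c) + s1 < 1" using u unfolding s1_def by (simp_all add: field_simps)
  have s2: "cmod v < s2" "cmod (snd c) + s2 < 1" using v unfolding s2_def by (simp_all add: field_simps)
  have s1p: "0 < s1" and s2p: "0 < s2"
    using s1(1) s2(1) norm_ge_zero[of u] norm_ge_zero[of v] by linarith+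
  define K where "K = cball (fst c) s1 \<times> cball (snd c) s2"
  have "K \<subseteq> bidisc"
    using cball_subset_unit_ball[OF s1(2)] cball_subset_unit_ball[OF s2(2)] by (auto simp: K_def bidisc_def)
  then have "compact (F ` K)"
    using compact_continuous_image continuous_on_subset[OF analytic2_continuous_on[OF F]]
    by (metis K_def compact_Times compact_cball)
  then obtain B where B: "\<And>w. w \<in> K \<Longrightarrow> cmod (F w) \<le> B"
    using compact_imp_bounded bounded_iff by (metis image_eqI)
  have Cauchy: "cmod (bcoef F c p q) * s1 ^ p * s2 ^ q \<le> B" for p q
  proof (rule bcoef_Cauchy_inequality[OF F s1p s1(2) s2p s2(2)])
    show "cmod (F w) \<le> B" if "w \<in> torus2 c (s1, s2)" for w
      by (rule B) (use that in \<open>auto simp: torus2_def K_def dist_norm norm_minus_commute mem_Times_iff\<close>)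
  qed
  show ?thesis
  proof
    show "0 \<le> cmod u / s1" "cmod u / s1 < 1" "0 \<le> cmod v / s2" "cmod v / s2 < 1"
      using s1 s2 s1p s2p by auto
    show "cmod (bcoef F c p q * u ^ p * v ^ q) \<le> B * ((cmod u / s1) ^ p * (cmod v / s2) ^ q)" for p q
    proof -
      have "cmod (bcoef F c p q * u ^ p * v ^ q) = (cmod (bcoef F c p q) * s1 ^ p * s2 ^ q) *
          ((cmod u / s1) ^ p * (cmod v / s2) ^ q)"
        using s1p s2p by (simp add: norm_mult norm_power power_divide)
      also have "\<dots> \<le> B * ((cmod u / s1) ^ p * (cmod v / s2) ^ q)"
        by (rule mult_right_mono[OF Cauchy]) (use s1p s2p in simp)
      finally show ?thesis .
    qed
  qed
qed

lemma bcoef_terms_has_sum: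
  assumes F: "analytic2 F" and u: "cmod (fst c) + cmod u < 1" and v: "cmod (snd c) + cmod v < 1"
  shows "((\<lambda>(p, q). bcoef F c p q * u ^ p * v ^ q) has_sum F (fst c + u, snd c + v)) UNIV"
proof -
  define a where "a = (\<lambda>(p, q). bcoef F c p q * u ^ p * v ^ q)"
  obtain x y B :: real where x: "0 \<le> x" "x < 1" and y: "0 \<le> y" "y < 1"
    and "\<And>p q. cmod (bcoef F c p q * u ^ p * v ^ q) \<le> B * (x ^ p * y ^ q)"
    using bcoef_terms_geometric_bound[OF F u v] by metis
  then have bound: "cmod (a (p, q)) \<le> B * (x ^ p * y ^ q)" for p q
    by (simp add: a_def)
  have "(\<lambda>(p, q). B * (x ^ p * y ^ q)) summable_on UNIV"
    using summable_on_cmult_right[OF summable_on_geometric_product[OF x y]] by (simp add: case_prod_unfold)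
  then have "(\<lambda>z. norm (a z)) summable_on UNIV"
    by (rule Infinite_Sum.abs_summable_on_comparison_test') (use bound in auto)
  then obtain S where S: "(a has_sum S) UNIV"
    using Infinite_Sum.abs_summable_summable summable_on_def by blast
  \<comment> \<open>Summing over p first is Taylor's formula for \<open>deriv_snd\<close> in w1, then over q Taylor's formula in w2.\<close>
  define T where "T q = deriv_snd F q (snd c) (fst c + u) / fact q * v ^ q" for q
  have row: "((\<lambda>p. a (p, q)) has_sum T q) UNIV" for q
  proof (rule norm_summable_imp_has_sum)
    have "summable (\<lambda>p. B * y ^ q * x ^ p)"
      using x by (intro summable_mult summable_geometric) simp
    then show "summable (\<lambda>p. norm (a (p, q)))"
      by (rule summable_comparison_test[rotated]) (use bound in \<open>auto simp: mult_ac\<close>)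
    have "cmod (snd c) < 1" using v norm_ge_zero[of v] by linarith
    then have "deriv_snd F q (snd c) holomorphic_on ball (fst c) (1 - cmod (fst c))"
      by (intro holomorphic_on_subset[OF holomorphic_on_deriv_snd[OF F]])
        (auto simp: ball_subset_ball_iff dist_norm)
    then have "(\<lambda>p. (deriv ^^ p) (deriv_snd F q (snd c)) (fst c) / fact p * (fst c + u - fst c) ^ p)
        sums deriv_snd F q (snd c) (fst c + u)"
      by (rule holomorphic_power_series) (use u in \<open>simp add: dist_norm\<close>)
    then have "(\<lambda>p. (deriv ^^ p) (deriv_snd F q (snd c)) (fst c) / fact p * u ^ p * (v ^ q / fact q))
        sums (deriv_snd F q (snd c) (fst c + u) * (v ^ q / fact q))"
      by (intro sums_mult2) simp
    moreover have "(\<lambda>p. (deriv ^^ p) (deriv_snd F q (snd c)) (fst c) / fact p * u ^ p * (v ^ q / fact q))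
        = (\<lambda>p. a (p, q))"
      by (simp add: a_def bcoef_def pderiv2_eq_higher_deriv_deriv_snd field_simps)
    ultimately show "(\<lambda>p. a (p, q)) sums T q" by (simp add: T_def field_simps)
  qed
  have "((\<lambda>z. a (snd z, fst z)) has_sum S) (Sigma UNIV (\<lambda>_. UNIV))"
    using S by (subst has_sum_reindex_bij_witness[of _ prod.swap prod.swap]) auto
  then have "(T has_sum S) UNIV"
    by (rule has_sum_SigmaD) (use row in simp)
  then have T_S: "T sums S" by (rule has_sum_imp_sums)
  have "T sums F (fst c + u, snd c + v)"
  proof -
    have "cmod (fst c + u) < 1" using u norm_triangle_ineq[of "fst c" u] by linarith
    then have "(\<lambda>w2. F (fst c + u, w2)) holomorphic_on ball (snd c) (1 - cmod (snd c))"
      by (intro holomorphic_on_subset[OF analytic2_holomorphic_snd[OF F]])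
        (auto simp: ball_subset_ball_iff dist_norm)
    then have "(\<lambda>q. (deriv ^^ q) (\<lambda>w2. F (fst c + u, w2)) (snd c) / fact q * (snd c + v - snd c) ^ q)
        sums F (fst c + u, snd c + v)"
      by (rule holomorphic_power_series) (use v in \<open>simp add: dist_norm\<close>)
    then show ?thesis unfolding T_def[abs_def] deriv_snd_def by simp
  qed
  with T_S have "S = F (fst c + u, snd c + v)" by (rule sums_unique2)
  then show ?thesis using S by (simp add: a_def)
qed

lemma hpoly_sums:
  assumes F: "analytic2 F" and u: "cmod (fst c) + cmod u < 1" and v: "cmod (snd c) + cmod v < 1"
  shows "(\<lambda>k. hpoly F c k (u, v)) sums F (fst c + u, snd c + v)"
proof -
  define a where "a = (\<lambda>(p, q). bcoef F c p q * u ^ p * v ^ q)"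
  have "((\<lambda>z. a (snd z, fst z - snd z)) has_sum F (fst c + u, snd c + v)) (Sigma UNIV (\<lambda>k. {..k}))"
    using bcoef_terms_has_sum[OF F u v] unfolding a_def[symmetric]
    by (subst has_sum_reindex_bij_witness[of _ "\<lambda>z. (fst z + snd z, fst z)" "\<lambda>z. (snd z, fst z - snd z)"]) auto
  then have "((\<lambda>k. \<Sum>j\<le>k. a (j, k - j)) has_sum F (fst c + u, snd c + v)) UNIV"
    by (rule has_sum_SigmaD) auto
  then have "(\<lambda>k. \<Sum>j\<le>k. a (j, k - j)) sums F (fst c + u, snd c + v)"
    by (rule has_sum_imp_sums)
  moreover have "(\<lambda>k. \<Sum>j\<le>k. a (j, k - j)) = (\<lambda>k. hpoly F c k (u, v))"
    by (simp add: a_def hpoly_def)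
  ultimately show ?thesis by simp
qed

definition main_coef_max :: "(complex \<times> complex \<Rightarrow> complex) \<Rightarrow> complex \<times> complex \<Rightarrow> real \<times> real \<Rightarrow> nat \<Rightarrow> real" where
  "main_coef_max F z R k = Max ((\<lambda>j1. cmod (bcoef F z j1 (k - j1)) * fst R ^ j1 * snd R ^ (k - j1)) ` {..k})"

lemma main_polynomial_iff:
  "main_polynomial F z R k \<longleftrightarrow>
     (\<forall>w\<in>torus2 z R. cmod (\<Sum>k'. if k' = k then 0 else hpoly F z k' (fst w - fst z, snd w - snd z))
        \<le> 1/2 * main_coef_max F z R k)"
  unfolding main_polynomial_def main_coef_max_def ..

lemma main_coef_max_ge:
  assumes "j1 \<le> k"
  shows "cmod (bcoef F z j1 (k - j1)) * fst R ^ j1 * snd R ^ (k - j1) \<le> main_coef_max F z R k"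
  unfolding main_coef_max_def by (rule Max_ge) (use assms in auto)

lemma main_coef_max_nonneg:
  assumes "0 \<le> fst R" "0 \<le> snd R" shows "0 \<le> main_coef_max F z R k"
  using assms main_coef_max_ge[of 0 k F z R] by (simp add: order_trans[OF _ main_coef_max_ge[of 0 k]])

lemma norm_hpoly_le:
  assumes "cmod (fst w) = fst R" "cmod (snd w) = snd R"
  shows "cmod (hpoly F z k w) \<le> (real k + 1) * main_coef_max F z R k"
proof -
  have "cmod (hpoly F z k w) \<le> (\<Sum>j1\<le>k. cmod (bcoef F z j1 (k - j1) * fst w ^ j1 * snd w ^ (k - j1)))"
    unfolding hpoly_def by (rule norm_sum)
  also have "\<dots> = (\<Sum>j1\<le>k. cmod (bcoef F z j1 (k - j1)) * fst R ^ j1 * snd R ^ (k - j1))"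
    by (simp add: norm_mult norm_power assms)
  also have "\<dots> \<le> (\<Sum>j1\<le>k. main_coef_max F z R k)"
    by (intro sum_mono main_coef_max_ge) simp
  finally show ?thesis by (simp add: add.commute)
qed

lemma main_polynomial_remainder:
  assumes F: "analytic2 F" and R: "cmod (fst z) + fst R < 1" "cmod (snd z) + snd R < 1"
    and mp: "main_polynomial F z R k" and w: "w \<in> torus2 z R"
  shows "cmod (F w - hpoly F z k (fst w - fst z, snd w - snd z)) \<le> 1/2 * main_coef_max F z R k"
proof -
  let ?d = "(fst w - fst z, snd w - snd z)"
  have "(\<lambda>k'. hpoly F z k' ?d) sums F w"
    using hpoly_sums[OF F, of z "fst w - fst z" "snd w - snd z"] w R by (auto simp: torus2_def)
  from sums_diff[OF this sums_single[of k "\<lambda>_. hpoly F z k ?d"]]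
  have "(\<lambda>k'. if k' = k then 0 else hpoly F z k' ?d) sums (F w - hpoly F z k ?d)"
    by (simp add: if_distrib cong: if_cong)
  then show ?thesis
    using mp w unfolding main_polynomial_iff by (auto simp: sums_iff)
qed

lemma main_polynomial_polydisc_bound:
  assumes F: "analytic2 F" and R: "0 < fst R" "cmod (fst z) + fst R < 1" "0 < snd R" "cmod (snd z) + snd R < 1"
    and mp: "main_polynomial F z R k" and "k \<le> p" and w: "w \<in> cpolydisc z R"
  shows "cmod (F w) \<le> (real p + 2) * main_coef_max F z R k"
proof -
  let ?M = "main_coef_max F z R k"
  have M: "0 \<le> ?M" using R by (intro main_coef_max_nonneg) auto
  have "cmod (F w') \<le> (real p + 2) * ?M" if w': "w' \<in> torus2 z R" for w'
  proof -
    let ?d = "(fst w' - fst z, snd w' - snd z)"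
    have "cmod (F w') \<le> cmod (F w' - hpoly F z k ?d) + cmod (hpoly F z k ?d)"
      using norm_triangle_sub[of "F w'" "hpoly F z k ?d"] by simp
    also have "\<dots> \<le> 1/2 * ?M + (real k + 1) * ?M"
      using main_polynomial_remainder[OF F R(2,4) mp w'] norm_hpoly_le[of ?d R F z k] w'
      by (intro add_mono) (auto simp: torus2_def)
    also have "\<dots> = (real k + 3/2) * ?M" by (simp add: algebra_simps)
    also have "\<dots> \<le> (real p + 2) * ?M"
      using \<open>k \<le> p\<close> M by (intro mult_right_mono) auto
    finally show ?thesis .
  qed
  then show ?thesis
    using polydisc_maximum_modulus[OF F R(1,2) R(3,4), of "(real p + 2) * ?M" w] w by simp
qed

lemma main_coef_max_le_scaled:
  assumes R: "0 \<le> fst R" "0 \<le> snd R" "fst R \<le> Q * s1" "snd R \<le> Q * s2"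
    and Q: "1 \<le> Q" and "k \<le> p" and s: "0 \<le> s1" "0 \<le> s2"
    and B: "\<And>j1 j2. cmod (bcoef F z j1 j2) * s1 ^ j1 * s2 ^ j2 \<le> B"
  shows "main_coef_max F z R k \<le> Q ^ p * B"
  unfolding main_coef_max_def
proof (rule Max.boundedI)
  fix x assume "x \<in> (\<lambda>j1. cmod (bcoef F z j1 (k - j1)) * fst R ^ j1 * snd R ^ (k - j1)) ` {..k}"
  then obtain j where j: "j \<le> k" and x: "x = cmod (bcoef F z j (k - j)) * fst R ^ j * snd R ^ (k - j)"
    by auto
  have B0: "0 \<le> B" using B[of 0 0] by (simp add: order_trans[OF norm_ge_zero])
  have "x \<le> cmod (bcoef F z j (k - j)) * (Q * s1) ^ j * (Q * s2) ^ (k - j)"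
    unfolding x using R by (intro mult_mono power_mono) auto
  also have "\<dots> = Q ^ (j + (k - j)) * (cmod (bcoef F z j (k - j)) * s1 ^ j * s2 ^ (k - j))"
    by (simp add: power_add power_mult_distrib algebra_simps)
  also have "\<dots> \<le> Q ^ p * B"
    using j \<open>k \<le> p\<close> Q B0 s by (intro mult_mono power_increasing B) auto
  finally show "x \<le> Q ^ p * B" .
qed simp_all

definition nterm_max :: "(complex \<times> complex \<Rightarrow> complex) \<Rightarrow> (complex \<times> complex \<Rightarrow> real)
    \<Rightarrow> (complex \<times> complex \<Rightarrow> real) \<Rightarrow> complex \<times> complex \<Rightarrow> nat \<Rightarrow> real" where
  "nterm_max F l1 l2 z n = Max ((\<lambda>(k1, k2). nterm F l1 l2 z k1 k2) ` {(k1, k2). k1 + k2 \<le> n})"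

lemma bounded_L_index_joint_iff:
  "bounded_L_index_joint F l1 l2 \<longleftrightarrow>
     (\<exists>n0. \<forall>z\<in>bidisc. \<forall>p1 p2. nterm F l1 l2 z p1 p2 \<le> nterm_max F l1 l2 z n0)"
  unfolding bounded_L_index_joint_def nterm_max_def ..

lemma nterm_le_nterm_max:
  assumes "k1 + k2 \<le> n" shows "nterm F l1 l2 z k1 k2 \<le> nterm_max F l1 l2 z n"
proof -
  have "finite {(k1, k2). k1 + k2 \<le> n}"
    by (rule finite_subset[of _ "{..n} \<times> {..n}"]) auto
  then show ?thesis
    unfolding nterm_max_def using assms by (intro Max_ge) (auto intro!: image_eqI[where x = "(k1, k2)"])
qed

lemma nterm_nonneg: "0 \<le> l1 z \<Longrightarrow> 0 \<le> l2 z \<Longrightarrow> 0 \<le> nterm F l1 l2 z k1 k2"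
  by (simp add: nterm_def)

lemma nterm_max_nonneg: "0 \<le> l1 z \<Longrightarrow> 0 \<le> l2 z \<Longrightarrow> 0 \<le> nterm_max F l1 l2 z n"
  using nterm_le_nterm_max[of 0 0 n F l1 l2 z] nterm_nonneg[of l1 z l2 F 0 0] by simp

lemma bcoef_scaled_eq_nterm:
  assumes "0 < l1 z" "0 < l2 z"
  shows "cmod (bcoef F z j1 j2) * (r1 / l1 z) ^ j1 * (r2 / l2 z) ^ j2 = nterm F l1 l2 z j1 j2 * r1 ^ j1 * r2 ^ j2"
  using assms by (simp add: bcoef_def nterm_def norm_divide norm_mult power_divide field_simps)

lemma main_coef_max_le_nterm_max:
  assumes l: "0 < l1 z" "0 < l2 z" and r: "0 \<le> r1" "r1 \<le> \<beta>" "0 \<le> r2" "r2 \<le> \<beta>"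
    and \<beta>: "1 \<le> \<beta>" and "k \<le> n"
  shows "main_coef_max F z (r1 / l1 z, r2 / l2 z) k \<le> \<beta> ^ k * nterm_max F l1 l2 z n"
  unfolding main_coef_max_def
proof (rule Max.boundedI)
  fix x assume "x \<in> (\<lambda>j. cmod (bcoef F z j (k - j)) * fst (r1 / l1 z, r2 / l2 z) ^ j
      * snd (r1 / l1 z, r2 / l2 z) ^ (k - j)) ` {..k}"
  then obtain j where j: "j \<le> k" and x: "x = nterm F l1 l2 z j (k - j) * r1 ^ j * r2 ^ (k - j)"
    using bcoef_scaled_eq_nterm[where ?l1.0 = l1 and ?l2.0 = l2 and z = z, OF l] by auto
  note x
  also have "\<dots> \<le> nterm_max F l1 l2 z n * \<beta> ^ j * \<beta> ^ (k - j)"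
    using j \<open>k \<le> n\<close> r l \<beta>
    by (intro mult_mono power_mono nterm_le_nterm_max nterm_nonneg mult_nonneg_nonneg nterm_max_nonneg) auto
  also have "\<dots> = \<beta> ^ k * nterm_max F l1 l2 z n"
    using j by (simp add: mult.assoc power_add[symmetric])
  finally show "x \<le> \<beta> ^ k * nterm_max F l1 l2 z n" .
qed simp_all

lemma admissibleL_bounds:
  assumes adm: "admissibleL \<beta> l1 l2" and "0 < \<beta>" and z: "z \<in> bidisc"
  shows "0 < l1 z" "0 < l2 z" "cmod (fst z) + \<beta> / l1 z < 1" "cmod (snd z) + \<beta> / l2 z < 1"
proof -
  have z1: "0 < 1 - cmod (fst z)" and z2: "0 < 1 - cmod (snd z)" using z by (auto simp: bidisc_def)
  have l1: "\<beta> / (1 - cmod (fst z)) < l1 z" and l2: "\<beta> / (1 - cmod (snd z)) < l2 z"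
    using adm z unfolding admissibleL_def by auto
  moreover have "0 < \<beta> / (1 - cmod (fst z))" "0 < \<beta> / (1 - cmod (snd z))"
    using \<open>0 < \<beta>\<close> z1 z2 by simp_all
  ultimately show "0 < l1 z" "0 < l2 z" by linarith+
  then show "cmod (fst z) + \<beta> / l1 z < 1" "cmod (snd z) + \<beta> / l2 z < 1"
    using l1 l2 z1 z2 by (simp_all add: field_simps)
qed

lemma admissibleL_cpolydisc_subset:
  assumes "admissibleL \<beta> l1 l2" "0 < \<beta>" "z0 \<in> bidisc"
  shows "cpolydisc z0 (divL (\<beta>, \<beta>) l1 l2 z0) \<subseteq> bidisc"
proof
  fix w assume "w \<in> cpolydisc z0 (divL (\<beta>, \<beta>) l1 l2 z0)"
  then have "cmod (fst w - fst z0) \<le> \<beta> / l1 z0" "cmod (snd w - snd z0) \<le> \<beta> / l2 z0"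
    by (auto simp: cpolydisc_def divL_def)
  moreover have "cmod (fst w) \<le> cmod (fst z0) + cmod (fst w - fst z0)"
    "cmod (snd w) \<le> cmod (snd z0) + cmod (snd w - snd z0)"
    using norm_triangle_ineq2[of "fst w" "fst z0"] norm_triangle_ineq2[of "snd w" "snd z0"] by linarith+
  ultimately show "w \<in> bidisc"
    using admissibleL_bounds[OF assms] by (auto simp: bidisc_def)
qed

lemma ereal_bounds_real:
  assumes "0 < a" "a \<le> b" "b < \<infinity>"
  obtains A C :: real where "0 < A" "\<And>x. a \<le> ereal x \<Longrightarrow> A \<le> x" "\<And>x. ereal x \<le> b \<Longrightarrow> x \<le> C"
  using assms by (cases a; cases b) auto

lemma lambda_bounds:
  assumes "z0 \<in> bidisc" "z \<in> cpolydisc z0 (divL R l1 l2 z0)"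
  shows "lambda1 l l1 l2 R \<le> ereal (l z / l z0)" "ereal (l z / l z0) \<le> lambda2 l l1 l2 R"
  using assms unfolding lambda1_def lambda2_def
  by (auto intro!: INF_lower2 SUP_upper2 INF_lower SUP_upper)

lemma Q2_ratio_bounds:
  assumes Q2: "Q2 \<beta> l1 l2" and \<beta>: "0 < \<beta>" and l: "l \<in> {l1, l2}"
  obtains A C where "0 < A" "\<And>z0 z. z0 \<in> bidisc \<Longrightarrow> z \<in> cpolydisc z0 (divL (\<beta>, \<beta>) l1 l2 z0) \<Longrightarrow>
      A * l z0 \<le> l z \<and> l z \<le> C * l z0"
proof -
  have "0 < lambda1 l l1 l2 (\<beta>, \<beta>)" "lambda1 l l1 l2 (\<beta>, \<beta>) \<le> lambda2 l l1 l2 (\<beta>, \<beta>)"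
    "lambda2 l l1 l2 (\<beta>, \<beta>) < \<infinity>"
    using Q2 \<beta> l unfolding Q2_def by auto
  then obtain A C where A: "0 < A" and lower: "\<And>x. lambda1 l l1 l2 (\<beta>, \<beta>) \<le> ereal x \<Longrightarrow> A \<le> x"
    and upper: "\<And>x. ereal x \<le> lambda2 l l1 l2 (\<beta>, \<beta>) \<Longrightarrow> x \<le> C"
    using ereal_bounds_real by metis
  show ?thesis
  proof (rule that[OF A])
    fix z0 z assume z0: "z0 \<in> bidisc" and z: "z \<in> cpolydisc z0 (divL (\<beta>, \<beta>) l1 l2 z0)"
    have "0 < l z0"
      using l admissibleL_bounds[OF _ \<beta> z0] Q2 unfolding Q2_def by auto
    moreover have "A \<le> l z / l z0" "l z / l z0 \<le> C"
      using lower upper lambda_bounds[OF z0 z] by auto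
    ultimately show "A * l z0 \<le> l z \<and> l z \<le> C * l z0"
      by (simp add: pos_le_divide_eq pos_divide_le_eq)
  qed
qed

lemma Q2_uniform_ratio_bounds:
  assumes "Q2 \<beta> l1 l2" "0 < \<beta>"
  obtains A C where "0 < A" "\<And>z0 z. z0 \<in> bidisc \<Longrightarrow> z \<in> cpolydisc z0 (divL (\<beta>, \<beta>) l1 l2 z0) \<Longrightarrow>
      A * l1 z0 \<le> l1 z \<and> l1 z \<le> C * l1 z0 \<and> A * l2 z0 \<le> l2 z \<and> l2 z \<le> C * l2 z0"
proof -
  obtain A1 C1 where A1: "0 < A1" and b1: "\<And>z0 z. z0 \<in> bidisc \<Longrightarrow> z \<in> cpolydisc z0 (divL (\<beta>, \<beta>) l1 l2 z0) \<Longrightarrow>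
      A1 * l1 z0 \<le> l1 z \<and> l1 z \<le> C1 * l1 z0"
    using Q2_ratio_bounds[OF assms, of l1] by auto
  obtain A2 C2 where A2: "0 < A2" and b2: "\<And>z0 z. z0 \<in> bidisc \<Longrightarrow> z \<in> cpolydisc z0 (divL (\<beta>, \<beta>) l1 l2 z0) \<Longrightarrow>
      A2 * l2 z0 \<le> l2 z \<and> l2 z \<le> C2 * l2 z0"
    using Q2_ratio_bounds[OF assms, of l2] by auto
  have pos: "0 < l1 z0" "0 < l2 z0" if "z0 \<in> bidisc" for z0
    using admissibleL_bounds[OF _ assms(2) that] assms(1) unfolding Q2_def by auto
  show ?thesis
  proof (rule that[of "min A1 A2" "max C1 C2"])
    show "0 < min A1 A2" using A1 A2 by simp
    fix z0 z assume "z0 \<in> bidisc" "z \<in> cpolydisc z0 (divL (\<beta>, \<beta>) l1 l2 z0)"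
    with b1 b2 pos show "min A1 A2 * l1 z0 \<le> l1 z \<and> l1 z \<le> max C1 C2 * l1 z0 \<and>
        min A1 A2 * l2 z0 \<le> l2 z \<and> l2 z \<le> max C1 C2 * l2 z0"
      by (smt (verit, best) mult_right_mono max.cobounded1 max.cobounded2 min.cobounded1 min.cobounded2)
  qed
qed

section \<open>Propagation of the main-polynomial bound\<close>

lemma radius_ratio_bounds:
  fixes A C \<eta> \<beta> l0 l r :: real
  assumes "0 < A" "0 < l0" "A * l0 \<le> l" "l \<le> C * l0" "0 < \<eta>" "\<eta> < r" "r < \<beta>"
  shows "\<eta> / (C * l0) \<le> r / l" "r / l \<le> \<beta> / (A * l0)"
proof -
  have "0 < A * l0" using assms by simp
  then have "0 < l" using assms(3) by linarith
  with \<open>0 < A * l0\<close> show "\<eta> / (C * l0) \<le> r / l" "r / l \<le> \<beta> / (A * l0)"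
    using assms by (auto intro!: frac_le)
qed

lemma radius_le_scaled:
  fixes A C \<eta> \<beta> l0 \<rho> \<rho>' :: real
  assumes "\<rho>' \<le> \<beta> / (A * l0)" "\<eta> / (C * l0) \<le> \<rho>" "0 < A" "0 < C" "0 < \<eta>" "0 < l0"
  shows "\<rho>' \<le> max 1 (2 * \<beta> * C / (\<eta> * A)) * (\<rho> / 2)"
proof -
  have "\<beta> / (A * l0) = (2 * \<beta> * C / (\<eta> * A)) * ((\<eta> / (C * l0)) / 2)"
    using assms by (simp add: field_simps)
  also have "\<dots> \<le> max 1 (2 * \<beta> * C / (\<eta> * A)) * (\<rho> / 2)"
    using assms by (intro mult_mono) auto
  finally show ?thesis using assms(1) by linarith
qed

lemma step_le_radius:
  fixes C \<eta> \<beta> l0 \<rho> d N :: real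
  assumes "d \<le> \<beta> / l0" "\<eta> / (C * l0) \<le> \<rho>" "2 * \<beta> * C \<le> \<eta> * N"
    and "0 < N" "0 < C" "0 < \<eta>" "0 < \<beta>" "0 < l0"
  shows "2 * (d / N) \<le> \<rho>"
proof -
  have "2 * (d / N) = 2 * d / N" by simp
  also have "\<dots> \<le> 2 * (\<beta> / l0) / N"
    using assms by (intro divide_right_mono mult_left_mono) auto
  also have "\<dots> = (2 * \<beta> * C / (\<eta> * N)) * (\<eta> / (C * l0))"
    using assms by (simp add: field_simps)
  also have "\<dots> \<le> \<eta> / (C * l0)"
    using assms by (intro mult_left_le_one_le) (auto simp: field_simps)
  finally show ?thesis using assms(2) by linarith
qed

text \<open>
  The hypothesis of the theorem for d = beta, with the radii r1, r2 and the index k0 chosen as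
  functions of the point, and with A, C bounding l_j(z) / l_j(z0) on the polydisc of radius
  beta/L(z0), as provided by Q2.
\<close>

locale main_polynomial_family =
  fixes \<beta> :: real and l1 l2 :: "complex \<times> complex \<Rightarrow> real" and F :: "complex \<times> complex \<Rightarrow> complex"
    and p :: nat and \<eta> :: real and r1 r2 :: "complex \<times> complex \<Rightarrow> real" and k0 :: "complex \<times> complex \<Rightarrow> nat"
    and A C :: real
  assumes \<beta>: "1 < \<beta>" and F: "analytic2 F" and adm: "admissibleL \<beta> l1 l2"
    and \<eta>: "0 < \<eta>" "\<eta> < \<beta>"
    and main: "\<And>z. z \<in> bidisc \<Longrightarrow> \<eta> < r1 z \<and> r1 z < \<beta> \<and> \<eta> < r2 z \<and> r2 z < \<beta> \<and> k0 z \<le> p \<and>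
               main_polynomial F z (divL (r1 z, r2 z) l1 l2 z) (k0 z)"
    and A: "0 < A"
    and ratio: "\<And>z0 z. z0 \<in> bidisc \<Longrightarrow> z \<in> cpolydisc z0 (divL (\<beta>, \<beta>) l1 l2 z0) \<Longrightarrow>
               A * l1 z0 \<le> l1 z \<and> l1 z \<le> C * l1 z0 \<and> A * l2 z0 \<le> l2 z \<and> l2 z \<le> C * l2 z0"
begin

definition "rho z = divL (r1 z, r2 z) l1 l2 z"
definition "M z = main_coef_max F z (rho z) (k0 z)"
definition "Q = max 1 (2 * \<beta> * C / (\<eta> * A))"
definition "K = (real p + 2) * Q ^ p"

lemmas L_bounds = admissibleL_bounds[OF adm less_trans[OF zero_less_one \<beta>]]
lemmas cpolydisc_subset_bidisc = admissibleL_cpolydisc_subset[OF adm less_trans[OF zero_less_one \<beta>]]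

lemma rho_bounds:
  assumes "z \<in> bidisc"
  shows "0 < fst (rho z)" "cmod (fst z) + fst (rho z) < 1"
    "0 < snd (rho z)" "cmod (snd z) + snd (rho z) < 1"
proof -
  have "0 < fst (rho z)" "0 < snd (rho z)" "fst (rho z) < \<beta> / l1 z" "snd (rho z) < \<beta> / l2 z"
    using L_bounds[OF assms] main[OF assms] \<eta>
    by (auto simp: rho_def divL_def divide_strict_right_mono)
  then show "0 < fst (rho z)" "cmod (fst z) + fst (rho z) < 1"
    "0 < snd (rho z)" "cmod (snd z) + snd (rho z) < 1"
    using L_bounds[OF assms] by linarith+
qed

lemma C_pos: "0 < C"
proof -
  have z0: "(0, 0) \<in> bidisc" by (simp add: bidisc_def)
  have "(0, 0) \<in> cpolydisc (0, 0) (divL (\<beta>, \<beta>) l1 l2 (0, 0))"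
    using L_bounds[OF z0] \<beta> by (simp add: cpolydisc_def divL_def)
  then have "l1 (0, 0) \<le> C * l1 (0, 0)" using ratio[OF z0] by blast
  then show ?thesis using L_bounds(1)[OF z0] by (simp add: zero_less_mult_iff)
qed

lemma rho_ratio_bounds:
  assumes z0: "z0 \<in> bidisc" and z: "z \<in> cpolydisc z0 (divL (\<beta>, \<beta>) l1 l2 z0)"
  shows "\<eta> / (C * l1 z0) \<le> fst (rho z)" "fst (rho z) \<le> \<beta> / (A * l1 z0)"
    "\<eta> / (C * l2 z0) \<le> snd (rho z)" "snd (rho z) \<le> \<beta> / (A * l2 z0)"
proof -
  have "z \<in> bidisc" using cpolydisc_subset_bidisc[OF z0] z by blast
  note bounds = radius_ratio_bounds[OF A _ _ _ \<eta>(1)] and main = main[OF this]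
  show "\<eta> / (C * l1 z0) \<le> fst (rho z)" "fst (rho z) \<le> \<beta> / (A * l1 z0)"
    using bounds[of "l1 z0" "l1 z" C "r1 z"] ratio[OF z0 z] L_bounds(1)[OF z0] main
    by (auto simp: rho_def divL_def)
  show "\<eta> / (C * l2 z0) \<le> snd (rho z)" "snd (rho z) \<le> \<beta> / (A * l2 z0)"
    using bounds[of "l2 z0" "l2 z" C "r2 z"] ratio[OF z0 z] L_bounds(2)[OF z0] main
    by (auto simp: rho_def divL_def)
qed

lemma local_bound:
  assumes z: "z \<in> bidisc" and w: "w \<in> cpolydisc z (rho z)"
  shows "cmod (F w) \<le> (real p + 2) * M z"
  unfolding M_def
  using main_polynomial_polydisc_bound[OF F rho_bounds[OF z] _ _ w] main[OF z]
  by (simp add: rho_def)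

lemma M_step:
  assumes z0: "z0 \<in> bidisc" and z: "z \<in> cpolydisc z0 (divL (\<beta>, \<beta>) l1 l2 z0)"
    and z': "z' \<in> cpolydisc z0 (divL (\<beta>, \<beta>) l1 l2 z0)"
    and d1: "2 * cmod (fst z' - fst z) \<le> fst (rho z)" and d2: "2 * cmod (snd z' - snd z) \<le> snd (rho z)"
  shows "M z' \<le> K * M z"
proof -
  have zb: "z \<in> bidisc" and z'b: "z' \<in> bidisc" using cpolydisc_subset_bidisc[OF z0] z z' by auto
  define s1 where "s1 = fst (rho z) / 2"
  define s2 where "s2 = snd (rho z) / 2"
  note \<rho> = rho_bounds[OF zb]
  have s: "0 < s1" "0 < s2" using \<rho> by (simp_all add: s1_def s2_def)
  have small: "cmod (fst z') + s1 < 1" "cmod (snd z') + s2 < 1"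
    using \<rho> d1 d2 norm_triangle_ineq2[of "fst z'" "fst z"] norm_triangle_ineq2[of "snd z'" "snd z"]
    by (simp_all add: s1_def s2_def)
  have "cmod (F w) \<le> (real p + 2) * M z" if w: "w \<in> torus2 z' (s1, s2)" for w
  proof (rule local_bound[OF zb])
    show "w \<in> cpolydisc z (rho z)"
      using w d1 d2 norm_triangle_ineq[of "fst w - fst z'" "fst z' - fst z"]
        norm_triangle_ineq[of "snd w - snd z'" "snd z' - snd z"]
      by (auto simp: cpolydisc_def torus2_def s1_def s2_def)
  qed
  then have Cauchy: "cmod (bcoef F z' j1 j2) * s1 ^ j1 * s2 ^ j2 \<le> (real p + 2) * M z" for j1 j2
    by (intro bcoef_Cauchy_inequality[OF F s(1) small(1) s(2) small(2)])
  note bounds = rho_ratio_bounds[OF z0] and l0 = L_bounds(1,2)[OF z0]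
  have "fst (rho z') \<le> Q * s1" "snd (rho z') \<le> Q * s2"
    unfolding Q_def s1_def s2_def
    using radius_le_scaled[OF bounds(2)[OF z'] bounds(1)[OF z] A C_pos \<eta>(1) l0(1)]
      radius_le_scaled[OF bounds(4)[OF z'] bounds(3)[OF z] A C_pos \<eta>(1) l0(2)] by auto
  then have "M z' \<le> Q ^ p * ((real p + 2) * M z)"
    unfolding M_def[of z'] using rho_bounds[OF z'b] main[OF z'b] s Cauchy
    by (intro main_coef_max_le_scaled) (auto simp: Q_def)
  then show ?thesis by (simp add: K_def mult_ac)
qed

lemma K_nonneg: "0 \<le> K"
  by (simp add: K_def Q_def)

definition "N = nat \<lceil>2 * \<beta> * C / \<eta>\<rceil> + 1"

lemma N_bounds: "0 < real N" "2 * \<beta> * C \<le> \<eta> * real N"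
proof -
  show "0 < real N" by (simp add: N_def)
  have "2 * \<beta> * C / \<eta> \<le> real N"
    unfolding N_def by linarith
  then show "2 * \<beta> * C \<le> \<eta> * real N" using \<eta> by (simp add: pos_divide_le_eq mult.commute)
qed

lemma polydisc_bound:
  assumes z0: "z0 \<in> bidisc" and w: "w \<in> cpolydisc z0 (divL (\<beta>, \<beta>) l1 l2 z0)"
  shows "cmod (F w) \<le> (real p + 2) * K ^ N * M z0"
proof -
  \<comment> \<open>N equal steps from z0 to w, each within half the main-polynomial radius at its start\<close>
  define z where "z i = z0 + (real i / real N) *\<^sub>R (w - z0)" for i
  note N = N_bounds and l0 = L_bounds(1,2)[OF z0]
  have z_dist: "cmod (fst (z i) - fst z0) = real i / real N * cmod (fst w - fst z0)"
    "cmod (snd (z i) - snd z0) = real i / real N * cmod (snd w - snd z0)" for i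
    by (simp_all add: z_def scaleR_conv_of_real norm_mult norm_divide)
  have diff: "z (Suc i) - z i = (1 / real N) *\<^sub>R (w - z0)" for i
    unfolding z_def by (simp add: scaleR_left_diff_distrib[symmetric] diff_divide_distrib[symmetric])
  have step: "cmod (fst (z (Suc i)) - fst (z i)) = cmod (fst w - fst z0) / real N"
    "cmod (snd (z (Suc i)) - snd (z i)) = cmod (snd w - snd z0) / real N" for i
    using arg_cong[OF diff[of i], of fst] arg_cong[OF diff[of i], of snd] by simp_all
  have w_dist: "cmod (fst w - fst z0) \<le> \<beta> / l1 z0" "cmod (snd w - snd z0) \<le> \<beta> / l2 z0"
    using w by (auto simp: cpolydisc_def divL_def)
  have z_in: "z i \<in> cpolydisc z0 (divL (\<beta>, \<beta>) l1 l2 z0)" if "i \<le> N" for i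
  proof -
    have t: "real i / real N \<le> 1" using that N by simp
    have "real i / real N * cmod (fst w - fst z0) \<le> \<beta> / l1 z0"
      "real i / real N * cmod (snd w - snd z0) \<le> \<beta> / l2 z0"
      using order_trans[OF mult_left_le_one_le[OF norm_ge_zero _ t] w_dist(1)]
        order_trans[OF mult_left_le_one_le[OF norm_ge_zero _ t] w_dist(2)] by simp_all
    then show ?thesis by (simp add: z_dist cpolydisc_def divL_def)
  qed
  have M_chain: "M (z i) \<le> K ^ i * M z0" if "i \<le> N" for i
    using that
  proof (induction i)
    case 0
    then show ?case by (simp add: z_def)
  next
    case (Suc i)
    note bounds = rho_ratio_bounds[OF z0 z_in, of i]
    have "M (z (Suc i)) \<le> K * M (z i)"
    proof (rule M_step[OF z0 z_in z_in])
      show "2 * cmod (fst (z (Suc i)) - fst (z i)) \<le> fst (rho (z i))"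
        unfolding step using Suc.prems step_le_radius[OF w_dist(1) bounds(1) N(2) N(1) C_pos \<eta>(1) _ l0(1)] \<beta>
        by simp
      show "2 * cmod (snd (z (Suc i)) - snd (z i)) \<le> snd (rho (z i))"
        unfolding step using Suc.prems step_le_radius[OF w_dist(2) bounds(3) N(2) N(1) C_pos \<eta>(1) _ l0(2)] \<beta>
        by simp
    qed (use Suc.prems in auto)
    also have "\<dots> \<le> K * (K ^ i * M z0)"
      using Suc K_nonneg by (intro mult_left_mono) auto
    finally show ?case by simp
  qed
  have "z N = w" using N by (simp add: z_def)
  have "w \<in> bidisc" using cpolydisc_subset_bidisc[OF z0] w by blast
  then have "cmod (F w) \<le> (real p + 2) * M w"
    using rho_bounds(1,3)[of w] by (intro local_bound) (auto simp: cpolydisc_def)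
  also have "\<dots> \<le> (real p + 2) * (K ^ N * M z0)"
    using M_chain[of N] \<open>z N = w\<close> by (intro mult_left_mono) auto
  finally show ?thesis by (simp add: mult.assoc)
qed

lemma bounded_L_index: "bounded_L_index_joint F l1 l2"
proof -
  define B where "B = (real p + 2) * K ^ N"
  obtain n where n: "B < \<beta> ^ n" using real_arch_pow[OF \<beta>] by blast
  show ?thesis unfolding bounded_L_index_joint_iff
  proof (intro exI[of _ "p + n"] ballI allI)
    fix z p1 p2 assume z: "z \<in> bidisc"
    let ?m = "nterm_max F l1 l2 z (p + n)" and ?t = "nterm F l1 l2 z p1 p2"
    show "?t \<le> ?m"
    proof (cases "p1 + p2 \<le> p + n")
      case True
      then show ?thesis by (rule nterm_le_nterm_max)
    next
      case False
      note l = L_bounds[OF z]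
      have m: "0 \<le> ?m" using l by (intro nterm_max_nonneg) auto
      have "M z \<le> \<beta> ^ k0 z * ?m"
        unfolding M_def rho_def divL_def using l main[OF z] \<beta> \<eta>
        by (intro main_coef_max_le_nterm_max) auto
      also have "\<dots> \<le> \<beta> ^ p * ?m"
        using main[OF z] \<beta> m by (intro mult_right_mono power_increasing) auto
      finally have Mz: "M z \<le> \<beta> ^ p * ?m" .
      have "cmod (F w) \<le> B * M z" if "w \<in> torus2 z (\<beta> / l1 z, \<beta> / l2 z)" for w
        using that unfolding B_def
        by (intro polydisc_bound[OF z]) (auto simp: torus2_def cpolydisc_def divL_def)
      then have "cmod (bcoef F z p1 p2) * (\<beta> / l1 z) ^ p1 * (\<beta> / l2 z) ^ p2 \<le> B * M z"
        using l \<beta> by (intro bcoef_Cauchy_inequality[OF F]) auto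
      moreover have "?t * \<beta> ^ (p1 + p2) = cmod (bcoef F z p1 p2) * (\<beta> / l1 z) ^ p1 * (\<beta> / l2 z) ^ p2"
        using bcoef_scaled_eq_nterm[where ?l1.0 = l1 and ?l2.0 = l2 and ?r1.0 = \<beta> and ?r2.0 = \<beta> and z = z, OF l(1,2)] by (simp add: power_add mult_ac)
      ultimately have "?t * \<beta> ^ (p1 + p2) \<le> B * M z" by simp
      also have "\<dots> \<le> B * \<beta> ^ p * ?m"
        using mult_left_mono[OF Mz, of B] K_nonneg by (simp add: B_def mult.assoc)
      also have "\<dots> \<le> \<beta> ^ (p1 + p2) * ?m"
      proof (intro mult_right_mono m)
        have "B * \<beta> ^ p \<le> \<beta> ^ n * \<beta> ^ p" using n \<beta> by (intro mult_right_mono) auto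
        also have "\<dots> \<le> \<beta> ^ (p1 + p2)"
          using False \<beta> by (simp add: power_add[symmetric] add.commute power_increasing)
        finally show "B * \<beta> ^ p \<le> \<beta> ^ (p1 + p2)" .
      qed
      finally show ?thesis using \<beta> by (simp add: mult.commute)
    qed
  qed
qed

end

theorem theorem9:
  fixes \<beta> :: real and l1 l2 :: "complex \<times> complex \<Rightarrow> real"
    and F :: "complex \<times> complex \<Rightarrow> complex"
  assumes "\<beta> > 1"
    and "Q2 \<beta> l1 l2"
    and "analytic2 F"
    and "\<exists>p::nat. \<forall>d. 0 < d \<and> d \<le> \<beta> \<longrightarrow>
           (\<exists>\<eta>. 0 < \<eta> \<and> \<eta> < d \<and>
             (\<forall>z0\<in>bidisc. \<exists>r1 r2 (k0::nat).
                \<eta> < r1 \<and> r1 < d \<and> \<eta> < r2 \<and> r2 < d \<and> k0 \<le> p \<and>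
                main_polynomial F z0 (divL (r1, r2) l1 l2 z0) k0))"
  shows "bounded_L_index_joint F l1 l2"
proof -
  obtain p :: nat and \<eta> where \<eta>: "0 < \<eta>" "\<eta> < \<beta>"
    and "\<forall>z0\<in>bidisc. \<exists>r1 r2 (k0::nat). \<eta> < r1 \<and> r1 < \<beta> \<and> \<eta> < r2 \<and> r2 < \<beta> \<and> k0 \<le> p \<and>
           main_polynomial F z0 (divL (r1, r2) l1 l2 z0) k0"
    using assms(1,4) by (auto dest!: spec[of _ \<beta>])
  then obtain r1 r2 k0 where "\<And>z0. z0 \<in> bidisc \<Longrightarrow> \<eta> < r1 z0 \<and> r1 z0 < \<beta> \<and> \<eta> < r2 z0 \<and> r2 z0 < \<beta> \<and>
      k0 z0 \<le> p \<and> main_polynomial F z0 (divL (r1 z0, r2 z0) l1 l2 z0) (k0 z0)"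
    by metis
  moreover obtain A C where "0 < A" "\<And>z0 z. z0 \<in> bidisc \<Longrightarrow> z \<in> cpolydisc z0 (divL (\<beta>, \<beta>) l1 l2 z0) \<Longrightarrow>
      A * l1 z0 \<le> l1 z \<and> l1 z \<le> C * l1 z0 \<and> A * l2 z0 \<le> l2 z \<and> l2 z \<le> C * l2 z0"
    using Q2_uniform_ratio_bounds[OF assms(2)] assms(1) by auto
  ultimately interpret main_polynomial_family \<beta> l1 l2 F p \<eta> r1 r2 k0 A C
    using assms(1-3) \<eta> by unfold_locales (auto simp: Q2_def)
  show ?thesis by (rule bounded_L_index)
qed

end
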